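(* Let $\varphi,\psi$ be nonnegative, bounded, integrable functions on $\mathbb R^d$ and $t\in(0,\infty]$. Then: (i) if $\varphi\le\psi$ then $\xi(\varphi,t)\le\xi(\psi,t)$; (ii) $\xi(\lambda\varphi,t)=\lambda\xi(\varphi,t)$ for every $\lambda>0$; (iii) $\xi(\varphi+\psi,t)\le\xi(\varphi,t)+\xi(\psi,t)$; (iv) for $0<\lambda<1$, with $\varphi_\lambda(x):=\varphi(\lambda x)$, $\xi(\varphi,t)\le\xi(\varphi_\lambda,t)\le\lambda^{-d}\xi(\varphi,t)$; (v) for $0<t<\infty$ and $h>0$, $\frac{t}{t+h}\xi(\varphi,t)\le\xi(\varphi,t+h)\le\xi(\varphi,t)$; (vi) if $\int\varphi\mathbf 1_{\{\varphi\ge a\}}\le\int\psi\mathbf 1_{\{\psi\ge a\}}$ for all $a$, then $\xi(\varphi,t)\le\xi(\psi,t)$; (vii) $\xi(\varphi,t)\to\int\varphi=\xi(\varphi,\infty)$ as $t\to\infty$; (viii) if $\varphi_1,\varphi_2,\dots$ are nonnegative bounded integrable functions with $\varphi_n\to\varphi$ pointwise and $\varphi_n\le\psi$ for all $n$, then $\xi(\varphi_n,t)\to\xi(\varphi,t)$.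
   Context: $H(x)=x\ln x-x+1$ for $x>0$. For a nonnegative bounded measurable $\varphi$ on $\mathbb R^d$ with $0<\int\varphi<\infty$ and $0<t<\infty$, the weighting value $s(\varphi,t)$ is the unique $s\ge0$ with $\int_{\mathbb R^d}H(e^{s\varphi(x)})dx=1/t$, and the weighted integral is $\xi(\varphi,t):=\int\varphi(x)e^{s(\varphi,t)\varphi(x)}dx$. Also $\xi(\varphi,\infty):=\int\varphi$, and $\xi(\varphi,t):=0$ for all $t$ if $\int\varphi=0$. *)

theory Defs
  imports "HOL-Analysis.Analysis"
begin

definition H :: "real \<Rightarrow> real" where
  "H x = x * ln x - x + 1"

text \<open>Nonnegative, bounded, (Lebesgue-)integrable functions on the Euclidean space 'a (= R^d, d = DIM('a)).\<close>
definition nnbi :: "('a::euclidean_space \<Rightarrow> real) \<Rightarrow> bool" where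
  "nnbi \<phi> \<longleftrightarrow> integrable lebesgue \<phi> \<and> (\<forall>x. 0 \<le> \<phi> x) \<and> bounded (range \<phi>)"

definition weight_s :: "('a::euclidean_space \<Rightarrow> real) \<Rightarrow> real \<Rightarrow> real" where
  "weight_s \<phi> t = (THE s. 0 \<le> s \<and> (LINT x|lebesgue. H (exp (s * \<phi> x))) = 1 / t)"

definition xi :: "('a::euclidean_space \<Rightarrow> real) \<Rightarrow> ereal \<Rightarrow> real" where
  "xi \<phi> t = (if (LINT x|lebesgue. \<phi> x) = 0 then 0
     else if t = \<infinity> then (LINT x|lebesgue. \<phi> x)
     else (LINT x|lebesgue. \<phi> x * exp (weight_s \<phi> (real_of_ereal t) * \<phi> x)))"

end

theory Submission
  imports Defs
begin

text \<open>
  The weighted integral xi(phi,t) is governed by a convex duality. By Young's inequality for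
  the pair H(f), e^u - 1, every positive weight f with \<integral>H(f) \<le> 1/t satisfies
  \<integral>phi f \<le> J(phi,t,r) = (1/t + \<integral>(e^(r phi) - 1)) / r for all r > 0, and for the optimal
  weight f = e^(s phi), s = s(phi,t), equality holds at r = s. Hence xi(phi,t) is at the
  same time the minimum over r of J(phi,t,r) and the maximum over admissible f of \<integral>phi f.
\<close>

text \<open>Along the exponential curve, H(e^y) = (y - 1) e^y + 1 has derivative y e^y; all
  scalar estimates on H below follow from this by the mean value theorem.\<close>
lemma H_exp: "H (exp y) = (y - 1) * exp y + 1"
  by (simp add: H_def algebra_simps)

lemma H_exp_deriv: "((\<lambda>y. H (exp y)) has_real_derivative y * exp y) (at y)"
proof -
  have "((\<lambda>y. (y - 1) * exp y + 1) has_real_derivative y * exp y) (at y)"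
    by (rule derivative_eq_intros refl | simp)+ (simp add: algebra_simps)
  thus ?thesis by (simp add: H_exp)
qed

lemma H_exp_mvt:
  assumes "y1 < y2"
  obtains z where "y1 < z" "z < y2" "H (exp y2) - H (exp y1) = (y2 - y1) * (z * exp z)"
  using MVT2[OF assms, of "\<lambda>y. H (exp y)" "\<lambda>y. y * exp y"] H_exp_deriv that by blast

lemma H_exp_strict_mono:
  assumes "0 \<le> y1" "y1 < y2"
  shows "H (exp y1) < H (exp y2)"
proof -
  obtain z where "y1 < z" "H (exp y2) - H (exp y1) = (y2 - y1) * (z * exp z)"
    using H_exp_mvt[OF assms(2)] by blast
  moreover have "0 < (y2 - y1) * (z * exp z)" using assms \<open>y1 < z\<close> by simp
  ultimately show ?thesis by simp
qed

lemma H_exp_mono: "0 \<le> y1 \<Longrightarrow> y1 \<le> y2 \<Longrightarrow> H (exp y1) \<le> H (exp y2)"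
  using H_exp_strict_mono[of y1 y2] by (cases "y1 = y2") auto

lemma H_exp_nonneg: "0 \<le> y \<Longrightarrow> 0 \<le> H (exp y)"
  using H_exp_mono[of 0 y] by (simp add: H_def)

lemma H_exp_increment:
  assumes "0 \<le> y1" "y1 \<le> y2" "y2 \<le> M"
  shows "H (exp y2) - H (exp y1) \<le> (y2 - y1) * (M * exp M)"
proof (cases "y1 = y2")
  case False
  then obtain z where z: "y1 < z" "z < y2" "H (exp y2) - H (exp y1) = (y2 - y1) * (z * exp z)"
    using H_exp_mvt assms(2) by (metis order.not_eq_order_implies_strict)
  have "z * exp z \<le> M * exp M" using z assms by (intro mult_mono) auto
  thus ?thesis unfolding z(3) using z by (intro mult_left_mono) auto
qed simp

lemma H_exp_upper: "0 \<le> y \<Longrightarrow> H (exp y) \<le> y^2 * exp y"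
  using H_exp_increment[of 0 y y] by (simp add: H_def power2_eq_square)

lemma H_exp_quadratic_lower:
  fixes y :: real
  assumes "0 \<le> y"
  shows "y^2 / 2 \<le> H (exp y)"
proof -
  let ?g = "\<lambda>y. H (exp y) - y^2 / 2"
  have "?g 0 \<le> ?g y"
  proof (rule DERIV_nonneg_imp_nondecreasing[OF assms])
    fix x :: real assume "0 \<le> x"
    have "(?g has_real_derivative x * exp x - x) (at x)"
      by (rule derivative_eq_intros H_exp_deriv refl | simp)+
    moreover have "0 \<le> x * exp x - x" using \<open>0 \<le> x\<close> mult_left_mono[of 1 "exp x" x] by simp
    ultimately show "\<exists>d. (?g has_real_derivative d) (at x) \<and> 0 \<le> d" by blast
  qed
  thus ?thesis by (simp add: H_def)
qed

text \<open>Young's inequality for the convex pair (H, e^u - 1): u f \<le> (H f + e^(r u) - 1) / r.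
  It is the source of every upper bound on xi.\<close>
lemma young_H:
  assumes "0 < r" "0 < f"
  shows "u * f \<le> H f / r + (exp (r * u) - 1) / r"
proof -
  define v where "v = r * u - ln f"
  have e: "exp (r * u) = f * exp v" using assms by (simp add: v_def exp_diff)
  have "f * (v + 1) \<le> f * exp v"
    using assms exp_ge_add_one_self[of v] by (intro mult_left_mono) (auto simp: add.commute)
  hence "r * (u * f) \<le> H f + (exp (r * u) - 1)" unfolding e H_def v_def by (simp add: algebra_simps)
  thus ?thesis using assms by (simp add: field_simps)
qed

lemma expm1_le: "0 \<le> y \<Longrightarrow> exp y - 1 \<le> y * exp (y::real)"
  using mult_right_mono[OF exp_ge_add_one_self[of "-y"], of "exp y"]
  by (simp add: exp_minus algebra_simps)

lemma expm1_linear_bound: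
  fixes u B r :: real
  assumes "0 \<le> u" "u \<le> B" "0 \<le> r"
  shows "\<bar>exp (r * u) - 1\<bar> \<le> (r * exp (r * B)) * u"
proof -
  have "0 \<le> r * u" using assms by simp
  hence "\<bar>exp (r * u) - 1\<bar> = exp (r * u) - 1" by simp
  also have "\<dots> \<le> (r * u) * exp (r * u)" using expm1_le[of "r * u"] assms by simp
  also have "\<dots> \<le> (r * u) * exp (r * B)" using assms by (intro mult_left_mono) (auto intro: mult_left_mono)
  finally show ?thesis by (simp add: algebra_simps)
qed

lemma nnbiD:
  assumes "nnbi \<phi>"
  shows "integrable lebesgue \<phi>" "\<And>x. 0 \<le> \<phi> x" "\<phi> \<in> borel_measurable lebesgue"
  using assms by (auto simp: nnbi_def)

lemma nnbi_bound:
  assumes "nnbi \<phi>"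
  obtains B where "0 \<le> B" "\<And>x. \<phi> x \<le> B"
proof -
  from assms obtain a where a: "\<forall>y\<in>range \<phi>. norm y \<le> a" by (auto simp: nnbi_def bounded_iff)
  hence "\<phi> x \<le> a" for x by (auto intro: order_trans[OF abs_ge_self])
  moreover have "0 \<le> a" using a nnbiD(2)[OF assms, of undefined] by force
  ultimately show ?thesis using that by blast
qed

lemma nnbiI:
  assumes "integrable lebesgue \<phi>" "\<And>x. 0 \<le> \<phi> x" "\<And>x. \<phi> x \<le> B"
  shows "nnbi \<phi>"
  using assms by (auto simp: nnbi_def bounded_iff intro!: exI[of _ B])

lemma nnbi_add:
  assumes "nnbi \<phi>" "nnbi \<psi>"
  shows "nnbi (\<lambda>x. \<phi> x + \<psi> x)"
proof -
  obtain B C where "\<And>x. \<phi> x \<le> B" "\<And>x. \<psi> x \<le> C" using nnbi_bound assms by metis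
  thus ?thesis using nnbiD[OF assms(1)] nnbiD[OF assms(2)]
    by (intro nnbiI[where B="B + C"]) (auto intro: add_mono add_nonneg_nonneg)
qed

lemma nnbi_cmult:
  assumes "nnbi \<phi>" "0 \<le> c"
  shows "nnbi (\<lambda>x. c * \<phi> x)"
proof -
  obtain B where "\<And>x. \<phi> x \<le> B" using nnbi_bound assms by metis
  thus ?thesis using nnbiD[OF assms(1)] assms(2)
    by (intro nnbiI[where B="c * B"]) (auto intro: mult_left_mono)
qed

lemma nnbi_integral_nonneg: "nnbi \<phi> \<Longrightarrow> 0 \<le> integral\<^sup>L lebesgue \<phi>"
  by (simp add: nnbiD Bochner_Integration.integral_nonneg)

lemma nnbi_integral_eq_0_iff: "nnbi \<phi> \<Longrightarrow> integral\<^sup>L lebesgue \<phi> = 0 \<longleftrightarrow> (AE x in lebesgue. \<phi> x = 0)"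
  using integral_nonneg_eq_0_iff_AE[of lebesgue \<phi>] by (simp add: nnbiD)

lemma integrable_dominated:
  fixes f g :: "'b \<Rightarrow> real"
  assumes "integrable M f" "g \<in> borel_measurable M" "\<And>x. \<bar>g x\<bar> \<le> C * f x"
  shows "integrable M g"
proof (rule Bochner_Integration.integrable_bound[where f="\<lambda>x. C * f x"])
  show "AE x in M. norm (g x) \<le> norm (C * f x)"
    using order_trans[OF assms(3) abs_ge_self] by simp
qed (use assms in auto)

lemma integrable_expm1:
  assumes "nnbi \<phi>" "0 \<le> r"
  shows "integrable lebesgue (\<lambda>x. exp (r * \<phi> x) - 1)"
proof -
  obtain B where B: "0 \<le> B" "\<And>x. \<phi> x \<le> B" using nnbi_bound[OF assms(1)] by blast
  note [measurable] = nnbiD(3)[OF assms(1)]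
  show ?thesis
    using expm1_linear_bound[OF nnbiD(2)[OF assms(1)] B(2) assms(2)]
    by (intro integrable_dominated[OF nnbiD(1)[OF assms(1)]]) auto
qed

lemma integrable_H_exp:
  assumes "nnbi \<phi>" "0 \<le> s"
  shows "integrable lebesgue (\<lambda>x. H (exp (s * \<phi> x)))"
proof -
  obtain B where B: "0 \<le> B" "\<And>x. \<phi> x \<le> B" using nnbi_bound[OF assms(1)] by blast
  note [measurable] = nnbiD(3)[OF assms(1)]
  have "\<bar>H (exp (s * \<phi> x))\<bar> \<le> (s^2 * B * exp (s * B)) * \<phi> x" for x
  proof -
    have p: "0 \<le> \<phi> x" "0 \<le> s * \<phi> x" using nnbiD(2)[OF assms(1)] assms(2) by auto
    have "\<bar>H (exp (s * \<phi> x))\<bar> \<le> (s * \<phi> x)^2 * exp (s * \<phi> x)"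
      using H_exp_nonneg[OF p(2)] H_exp_upper[OF p(2)] by simp
    also have "\<dots> = (s^2 * \<phi> x * exp (s * \<phi> x)) * \<phi> x" by (simp add: power2_eq_square)
    also have "\<dots> \<le> (s^2 * B * exp (s * B)) * \<phi> x"
      using p B assms(2) by (intro mult_right_mono mult_mono) (auto intro: mult_left_mono)
    finally show ?thesis .
  qed
  thus ?thesis unfolding H_def by (intro integrable_dominated[OF nnbiD(1)[OF assms(1)]]) auto
qed

lemma integrable_weighted:
  assumes "nnbi \<phi>" "nnbi \<psi>" "0 \<le> s"
  shows "integrable lebesgue (\<lambda>x. \<phi> x * exp (s * \<psi> x))"
proof -
  obtain B where B: "\<And>x. \<psi> x \<le> B" using nnbi_bound[OF assms(2)] by blast
  note [measurable] = nnbiD(3)[OF assms(1)] nnbiD(3)[OF assms(2)]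
  have "\<bar>\<phi> x * exp (s * \<psi> x)\<bar> \<le> exp (s * B) * \<phi> x" for x
    using nnbiD(2)[OF assms(1), of x] mult_left_mono[OF B[of x] assms(3)]
    by (simp add: abs_mult mult.commute mult_left_mono)
  thus ?thesis by (intro integrable_dominated[OF nnbiD(1)[OF assms(1)]]) auto
qed

definition entropy_at :: "('a::euclidean_space \<Rightarrow> real) \<Rightarrow> real \<Rightarrow> real" where
  "entropy_at \<phi> s = (LINT x|lebesgue. H (exp (s * \<phi> x)))"

lemma entropy_at_0: "entropy_at \<phi> 0 = 0"
  by (simp add: entropy_at_def H_def)

lemma entropy_at_diff:
  assumes "nnbi \<phi>" "0 \<le> s1" "0 \<le> s2"
  shows "entropy_at \<phi> s2 - entropy_at \<phi> s1 = (LINT x|lebesgue. H (exp (s2 * \<phi> x)) - H (exp (s1 * \<phi> x)))"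
  unfolding entropy_at_def using integrable_H_exp[OF assms(1)] assms(2,3)
  by (subst Bochner_Integration.integral_diff) auto

lemma entropy_at_increment:
  assumes "nnbi \<phi>" "0 \<le> B" "\<And>x. \<phi> x \<le> B" "0 \<le> s1" "s1 \<le> s2" "s2 \<le> S"
  shows "0 \<le> entropy_at \<phi> s2 - entropy_at \<phi> s1"
    "entropy_at \<phi> s2 - entropy_at \<phi> s1 \<le> (s2 - s1) * (S * B * exp (S * B) * integral\<^sup>L lebesgue \<phi>)"
proof -
  let ?g = "\<lambda>x. H (exp (s2 * \<phi> x)) - H (exp (s1 * \<phi> x))"
  have g: "0 \<le> ?g x" "?g x \<le> ((s2 - s1) * (S * B * exp (S * B))) * \<phi> x" for x
  proof -
    have a: "0 \<le> s1 * \<phi> x" "s1 * \<phi> x \<le> s2 * \<phi> x" "s2 * \<phi> x \<le> S * B"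
      using assms nnbiD(2)[OF assms(1), of x] by (auto intro: mult_mono mult_right_mono)
    show "0 \<le> ?g x" using H_exp_mono[OF a(1,2)] by simp
    show "?g x \<le> ((s2 - s1) * (S * B * exp (S * B))) * \<phi> x"
      using H_exp_increment[OF a] by (simp add: algebra_simps)
  qed
  have diff: "entropy_at \<phi> s2 - entropy_at \<phi> s1 = integral\<^sup>L lebesgue ?g"
    using entropy_at_diff[OF assms(1,4)] assms by simp
  show "0 \<le> entropy_at \<phi> s2 - entropy_at \<phi> s1"
    unfolding diff using g(1) by (simp add: Bochner_Integration.integral_nonneg)
  have "integral\<^sup>L lebesgue ?g \<le> (LINT x|lebesgue. ((s2 - s1) * (S * B * exp (S * B))) * \<phi> x)"
    using g(2) integrable_H_exp[OF assms(1)] nnbiD(1)[OF assms(1)] assms(4,5)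
    by (intro integral_mono) auto
  thus "entropy_at \<phi> s2 - entropy_at \<phi> s1 \<le> (s2 - s1) * (S * B * exp (S * B) * integral\<^sup>L lebesgue \<phi>)"
    unfolding diff by simp
qed

lemma entropy_at_continuous:
  assumes "nnbi \<phi>" "0 \<le> S"
  shows "continuous_on {0..S} (entropy_at \<phi>)"
proof -
  obtain B where B: "0 \<le> B" "\<And>x. \<phi> x \<le> B" using nnbi_bound[OF assms(1)] by blast
  define L where "L = S * B * exp (S * B) * integral\<^sup>L lebesgue \<phi>"
  have "0 \<le> L" unfolding L_def using assms B nnbi_integral_nonneg[OF assms(1)] by simp
  have ordered: "dist (entropy_at \<phi> s2) (entropy_at \<phi> s1) \<le> L * dist s2 s1"
    if "s1 \<in> {0..S}" "s2 \<in> {0..S}" "s1 \<le> s2" for s1 s2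
    using entropy_at_increment[OF assms(1) B, of s1 s2 S] that
    by (simp add: dist_real_def L_def algebra_simps)
  have "L-lipschitz_on {0..S} (entropy_at \<phi>)"
    unfolding lipschitz_on_def
    using \<open>0 \<le> L\<close> ordered by (metis dist_commute linorder_le_cases)
  thus ?thesis by (rule lipschitz_on_continuous_on)
qed

lemma entropy_at_strict_mono:
  assumes "nnbi \<phi>" "integral\<^sup>L lebesgue \<phi> \<noteq> 0" "0 \<le> s1" "s1 < s2"
  shows "entropy_at \<phi> s1 < entropy_at \<phi> s2"
proof -
  obtain B where B: "0 \<le> B" "\<And>x. \<phi> x \<le> B" using nnbi_bound[OF assms(1)] by blast
  let ?g = "\<lambda>x. H (exp (s2 * \<phi> x)) - H (exp (s1 * \<phi> x))"
  have diff: "entropy_at \<phi> s2 - entropy_at \<phi> s1 = integral\<^sup>L lebesgue ?g"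
    using entropy_at_diff[OF assms(1,3)] assms by simp
  have pos: "0 < ?g x" if "\<phi> x \<noteq> 0" for x
  proof -
    have "0 < \<phi> x" using that nnbiD(2)[OF assms(1), of x] by simp
    thus ?thesis using H_exp_strict_mono[of "s1 * \<phi> x" "s2 * \<phi> x"] assms by simp
  qed
  have "integral\<^sup>L lebesgue ?g \<noteq> 0"
  proof
    assume "integral\<^sup>L lebesgue ?g = 0"
    moreover have "integrable lebesgue ?g" using integrable_H_exp[OF assms(1)] assms(3,4) by auto
    moreover have "0 \<le> ?g x" for x using pos[of x] by fastforce
    ultimately have "AE x in lebesgue. ?g x = 0" by (simp add: integral_nonneg_eq_0_iff_AE)
    hence "AE x in lebesgue. \<phi> x = 0" by eventually_elim (use pos in force)
    thus False using assms(1,2) nnbi_integral_eq_0_iff by blast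
  qed
  moreover have "0 \<le> entropy_at \<phi> s2 - entropy_at \<phi> s1"
    using entropy_at_increment(1)[OF assms(1) B assms(3), of s2 s2] assms by simp
  ultimately show ?thesis using diff by linarith
qed

text \<open>The constraint can be met: the entropy grows at least quadratically in s.\<close>
lemma entropy_at_unbounded:
  assumes "nnbi \<phi>" "integral\<^sup>L lebesgue \<phi> \<noteq> 0" "0 < t"
  obtains S where "0 \<le> S" "1 / t \<le> entropy_at \<phi> S"
proof -
  obtain B where B: "0 \<le> B" "\<And>x. \<phi> x \<le> B" using nnbi_bound[OF assms(1)] by blast
  note [measurable] = nnbiD(3)[OF assms(1)]
  have p: "0 \<le> \<phi> x" for x using nnbiD(2)[OF assms(1)] .
  have "\<bar>(\<phi> x)^2\<bar> \<le> B * \<phi> x" for x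
    using mult_right_mono[OF B(2) p, of x] by (simp add: power2_eq_square)
  hence sq: "integrable lebesgue (\<lambda>x. (\<phi> x)^2)"
    by (intro integrable_dominated[OF nnbiD(1)[OF assms(1)]]) auto
  define q where "q = (LINT x|lebesgue. (\<phi> x)^2)"
  have "q \<noteq> 0"
  proof
    assume "q = 0"
    hence "AE x in lebesgue. (\<phi> x)^2 = 0" using sq by (simp add: q_def integral_nonneg_eq_0_iff_AE)
    hence "AE x in lebesgue. \<phi> x = 0" by eventually_elim simp
    thus False using assms(1,2) nnbi_integral_eq_0_iff by blast
  qed
  hence q: "0 < q" unfolding q_def by (simp add: order.not_eq_order_implies_strict Bochner_Integration.integral_nonneg)
  define S where "S = max 1 (2 / (t * q))"
  have S: "1 \<le> S" "2 / (t * q) \<le> S" unfolding S_def by auto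
  have "1 / t \<le> S^2 * q / 2"
  proof -
    have "2 / (t * q) \<le> S^2" using S by (simp add: power2_eq_square order_trans[OF _ mult_right_mono[of 1 S S]])
    thus ?thesis using q assms(3) by (simp add: field_simps)
  qed
  also have "\<dots> = (LINT x|lebesgue. (S * \<phi> x)^2 / 2)" by (simp add: q_def power_mult_distrib)
  also have "\<dots> \<le> entropy_at \<phi> S"
    unfolding entropy_at_def using S(1) p sq integrable_H_exp[OF assms(1), of S]
    by (intro integral_mono H_exp_quadratic_lower) (auto simp: power_mult_distrib)
  finally show ?thesis using S(1) by (intro that[of S]) auto
qed

text \<open>For a nonzero function the weighting value is the unique positive root of the
  constraint entropy_at = 1/t, which exists by continuity and strict monotonicity.\<close>
lemma weight_s_char:
  assumes "nnbi \<phi>" "integral\<^sup>L lebesgue \<phi> \<noteq> 0" "0 < t"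
  shows "0 < weight_s \<phi> t" "entropy_at \<phi> (weight_s \<phi> t) = 1 / t"
proof -
  obtain S where S: "0 \<le> S" "1 / t \<le> entropy_at \<phi> S" using entropy_at_unbounded[OF assms] .
  have "\<exists>s\<ge>0. s \<le> S \<and> entropy_at \<phi> s = 1 / t"
    by (rule IVT') (use entropy_at_0[of \<phi>] entropy_at_continuous[OF assms(1)] S assms(3) in auto)
  then obtain s where s: "0 \<le> s" "entropy_at \<phi> s = 1 / t" by blast
  have unique: "s' = s" if "0 \<le> s'" "entropy_at \<phi> s' = 1 / t" for s'
    using entropy_at_strict_mono[OF assms(1,2)] that s by (metis linorder_neqE less_irrefl)
  have "weight_s \<phi> t = s"
    unfolding weight_s_def entropy_at_def[symmetric] using s unique by blast
  moreover have "s \<noteq> 0" using s entropy_at_0[of \<phi>] assms(3) by auto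
  ultimately show "0 < weight_s \<phi> t" "entropy_at \<phi> (weight_s \<phi> t) = 1 / t" using s by auto
qed

text \<open>The exponential mass \<integral>(e^(r phi) - 1) and the dual functional
  J(phi,t,r) = (1/t + \<integral>(e^(r phi) - 1)) / r, whose infimum over r > 0 will be xi(phi,t).\<close>
definition expm1_mass :: "('a::euclidean_space \<Rightarrow> real) \<Rightarrow> real \<Rightarrow> real" where
  "expm1_mass \<phi> r = (LINT x|lebesgue. exp (r * \<phi> x) - 1)"

definition dual_J :: "('a::euclidean_space \<Rightarrow> real) \<Rightarrow> real \<Rightarrow> real \<Rightarrow> real" where
  "dual_J \<phi> t r = (1 / t + expm1_mass \<phi> r) / r"

lemma expm1_mass_nonneg: "nnbi \<phi> \<Longrightarrow> 0 \<le> r \<Longrightarrow> 0 \<le> expm1_mass \<phi> r"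
  unfolding expm1_mass_def by (intro Bochner_Integration.integral_nonneg) (simp add: nnbiD)

lemma expm1_mass_null:
  assumes "nnbi \<phi>" "integral\<^sup>L lebesgue \<phi> = 0"
  shows "expm1_mass \<phi> r = 0"
proof -
  have "AE x in lebesgue. \<phi> x = 0" using assms nnbi_integral_eq_0_iff by blast
  hence "AE x in lebesgue. exp (r * \<phi> x) - 1 = 0" by eventually_elim simp
  thus ?thesis unfolding expm1_mass_def by (rule integral_eq_zero_AE)
qed

lemma expm1_mass_mono:
  assumes "nnbi \<phi>" "nnbi \<psi>" "0 \<le> r" "\<And>x. \<phi> x \<le> \<psi> x"
  shows "expm1_mass \<phi> r \<le> expm1_mass \<psi> r"
  unfolding expm1_mass_def
  using integrable_expm1[OF assms(1,3)] integrable_expm1[OF assms(2,3)] assms(3,4)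
  by (intro integral_mono) (auto intro: mult_left_mono)

lemma expm1_mass_linear_bound:
  assumes "nnbi \<phi>" "0 \<le> r" "0 \<le> B" "\<And>x. \<phi> x \<le> B"
  shows "expm1_mass \<phi> r \<le> r * exp (r * B) * integral\<^sup>L lebesgue \<phi>"
proof -
  have "expm1_mass \<phi> r \<le> (LINT x|lebesgue. (r * exp (r * B)) * \<phi> x)"
    unfolding expm1_mass_def
    using expm1_linear_bound[OF nnbiD(2)[OF assms(1)] assms(4) assms(2)]
      integrable_expm1[OF assms(1,2)] nnbiD(1)[OF assms(1)]
    by (intro integral_mono) (auto simp: abs_le_iff)
  thus ?thesis by simp
qed

lemma xi_infinity: "xi \<phi> \<infinity> = (LINT x|lebesgue. \<phi> x)"
  unfolding xi_def by simp

lemma xi_null: "integral\<^sup>L lebesgue \<phi> = 0 \<Longrightarrow> xi \<phi> t = 0"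
  unfolding xi_def by simp

lemma xi_finite: "integral\<^sup>L lebesgue \<phi> \<noteq> 0 \<Longrightarrow>
   xi \<phi> (ereal t) = (LINT x|lebesgue. \<phi> x * exp (weight_s \<phi> t * \<phi> x))"
  unfolding xi_def by simp

lemma xi_nonneg: "nnbi \<phi> \<Longrightarrow> 0 \<le> xi \<phi> t"
  unfolding xi_def by (auto simp: nnbiD intro!: Bochner_Integration.integral_nonneg)

text \<open>Weak duality: for every admissible positive weight f (one with entropy at most 1/t)
  and every r > 0, Young's inequality bounds the weighted integral by the dual functional.\<close>
lemma weighted_le_dual_J:
  assumes "nnbi \<phi>" "0 < r" "\<And>x. 0 < f x"
    "integrable lebesgue (\<lambda>x. H (f x))" "(LINT x|lebesgue. H (f x)) \<le> 1 / t"
    "integrable lebesgue (\<lambda>x. \<phi> x * f x)"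
  shows "(LINT x|lebesgue. \<phi> x * f x) \<le> dual_J \<phi> t r"
proof -
  have ie: "integrable lebesgue (\<lambda>x. exp (r * \<phi> x) - 1)" using integrable_expm1[OF assms(1)] assms(2) by simp
  have "(LINT x|lebesgue. \<phi> x * f x) \<le> (LINT x|lebesgue. H (f x) / r + (exp (r * \<phi> x) - 1) / r)"
    using young_H[OF assms(2,3)] assms(4,6) ie by (intro integral_mono) auto
  also have "\<dots> = (LINT x|lebesgue. H (f x)) / r + expm1_mass \<phi> r / r"
    unfolding expm1_mass_def using ie assms(4) by simp
  also have "\<dots> \<le> dual_J \<phi> t r"
    unfolding dual_J_def using divide_right_mono[OF assms(5), of r] assms(2) by (simp add: add_divide_distrib)
  finally show ?thesis .
qed

lemma xi_le_dual_J:
  assumes "nnbi \<phi>" "0 < t" "0 < r"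
  shows "xi \<phi> (ereal t) \<le> dual_J \<phi> t r"
proof (cases "integral\<^sup>L lebesgue \<phi> = 0")
  case True
  thus ?thesis using expm1_mass_nonneg[OF assms(1)] assms by (simp add: xi_null dual_J_def)
next
  case False
  define s where "s = weight_s \<phi> t"
  have s: "0 < s" "entropy_at \<phi> s = 1 / t" using weight_s_char[OF assms(1) False assms(2)] by (auto simp: s_def)
  have "(LINT x|lebesgue. \<phi> x * exp (s * \<phi> x)) \<le> dual_J \<phi> t r"
    using s integrable_H_exp[OF assms(1)] integrable_weighted[OF assms(1,1)]
    by (intro weighted_le_dual_J[OF assms(1,3)]) (auto simp: entropy_at_def)
  thus ?thesis by (simp add: xi_finite[OF False] s_def)
qed

text \<open>Strong duality: the bound is attained at r = weight_s, where the constraint holds with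
  equality and the identity s f e^(s f) = H(e^(s f)) + (e^(s f) - 1) turns it into J.\<close>
lemma xi_eq_dual_J:
  assumes "nnbi \<phi>" "integral\<^sup>L lebesgue \<phi> \<noteq> 0" "0 < t"
  shows "xi \<phi> (ereal t) = dual_J \<phi> t (weight_s \<phi> t)"
proof -
  define s where "s = weight_s \<phi> t"
  have s: "0 < s" "entropy_at \<phi> s = 1 / t" using weight_s_char[OF assms] by (auto simp: s_def)
  have pointwise: "s * (\<phi> x * exp (s * \<phi> x)) = H (exp (s * \<phi> x)) + (exp (s * \<phi> x) - 1)" for x
    by (simp add: H_exp algebra_simps)
  have "s * (LINT x|lebesgue. \<phi> x * exp (s * \<phi> x)) = (LINT x|lebesgue. H (exp (s * \<phi> x)) + (exp (s * \<phi> x) - 1))"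
    by (simp only: pointwise flip: integral_mult_right_zero)
  also have "\<dots> = entropy_at \<phi> s + expm1_mass \<phi> s"
    unfolding entropy_at_def expm1_mass_def
    using integrable_H_exp[OF assms(1)] integrable_expm1[OF assms(1)] s(1) by simp
  finally have "(LINT x|lebesgue. \<phi> x * exp (s * \<phi> x)) = dual_J \<phi> t s"
    using s by (simp add: dual_J_def field_simps)
  thus ?thesis by (simp add: xi_finite[OF assms(2)] s_def)
qed

lemma dual_J_approx:
  assumes "nnbi \<phi>" "0 < t" "0 < e"
  obtains r where "0 < r" "dual_J \<phi> t r \<le> xi \<phi> (ereal t) + e"
proof (cases "integral\<^sup>L lebesgue \<phi> = 0")
  case True
  have "dual_J \<phi> t (1 / (t * e)) = e"
    using assms by (simp add: dual_J_def expm1_mass_null[OF assms(1) True])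
  thus ?thesis using that[of "1 / (t * e)"] assms by (simp add: xi_null[OF True])
next
  case False
  thus ?thesis using that weight_s_char[OF assms(1) False assms(2)] xi_eq_dual_J[OF assms(1) False assms(2)] assms(3)
    by simp
qed

lemma xi_ge_of_dual_J:
  assumes "nnbi \<phi>" "0 < t" "\<And>r. 0 < r \<Longrightarrow> y \<le> dual_J \<phi> t r"
  shows "y \<le> xi \<phi> (ereal t)"
proof (rule field_le_epsilon)
  fix e :: real assume "0 < e"
  then obtain r where "0 < r" "dual_J \<phi> t r \<le> xi \<phi> (ereal t) + e" using dual_J_approx[OF assms(1,2)] by blast
  thus "y \<le> xi \<phi> (ereal t) + e" using assms(3)[of r] by simp
qed

lemma xi_compare:
  assumes "nnbi \<phi>" "nnbi \<psi>" "0 < t1" "0 < t2" "0 < C"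
    "\<And>r. 0 < r \<Longrightarrow> \<exists>r'>0. dual_J \<phi> t1 r' \<le> C * dual_J \<psi> t2 r"
  shows "xi \<phi> (ereal t1) \<le> C * xi \<psi> (ereal t2)"
proof -
  have "xi \<phi> (ereal t1) / C \<le> xi \<psi> (ereal t2)"
  proof (rule xi_ge_of_dual_J[OF assms(2,4)])
    fix r :: real assume "0 < r"
    then obtain r' where "0 < r'" "dual_J \<phi> t1 r' \<le> C * dual_J \<psi> t2 r" using assms(6) by blast
    hence "xi \<phi> (ereal t1) \<le> C * dual_J \<psi> t2 r" using xi_le_dual_J[OF assms(1,3)] by (meson order_trans)
    thus "xi \<phi> (ereal t1) / C \<le> dual_J \<psi> t2 r" using assms(5) by (simp add: divide_le_eq mult.commute)
  qed
  thus ?thesis using assms(5) by (simp add: divide_le_eq mult.commute)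
qed

lemma weighted_le_xi:
  assumes "nnbi \<phi>" "0 < t" "\<And>x. 0 < f x"
    "integrable lebesgue (\<lambda>x. H (f x))" "(LINT x|lebesgue. H (f x)) \<le> 1 / t"
    "integrable lebesgue (\<lambda>x. \<phi> x * f x)"
  shows "(LINT x|lebesgue. \<phi> x * f x) \<le> xi \<phi> (ereal t)"
  using weighted_le_dual_J[OF assms(1) _ assms(3-6)] by (intro xi_ge_of_dual_J[OF assms(1,2)])

text \<open>The weight e^(s phi) is at least 1, so xi(phi,t) \<ge> \<integral>phi.\<close>
lemma xi_ge_integral:
  assumes "nnbi \<phi>" "0 < t"
  shows "integral\<^sup>L lebesgue \<phi> \<le> xi \<phi> (ereal t)"
proof (cases "integral\<^sup>L lebesgue \<phi> = 0")
  case False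
  define s where "s = weight_s \<phi> t"
  have s: "0 < s" using weight_s_char[OF assms(1) False assms(2)] by (simp add: s_def)
  have "\<phi> x \<le> \<phi> x * exp (s * \<phi> x)" for x
    using mult_left_mono[of 1 "exp (s * \<phi> x)" "\<phi> x"] nnbiD(2)[OF assms(1), of x] s by simp
  hence "integral\<^sup>L lebesgue \<phi> \<le> (LINT x|lebesgue. \<phi> x * exp (s * \<phi> x))"
    using nnbiD(1)[OF assms(1)] integrable_weighted[OF assms(1,1)] s by (intro integral_mono) auto
  thus ?thesis by (simp add: xi_finite[OF False] s_def)
qed (simp add: xi_null)

lemma xi_le_of_expm1_mass_le:
  assumes "nnbi \<phi>" "nnbi \<psi>" "0 < t" "\<And>r. 0 < r \<Longrightarrow> expm1_mass \<phi> r \<le> expm1_mass \<psi> r"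
  shows "xi \<phi> (ereal t) \<le> xi \<psi> (ereal t)"
proof -
  have "xi \<phi> (ereal t) \<le> 1 * xi \<psi> (ereal t)"
  proof (rule xi_compare[OF assms(1,2,3,3)])
    fix r :: real assume "0 < r"
    hence "dual_J \<phi> t r \<le> 1 * dual_J \<psi> t r" using assms(4) by (simp add: dual_J_def divide_right_mono)
    thus "\<exists>r'>0. dual_J \<phi> t r' \<le> 1 * dual_J \<psi> t r" using \<open>0 < r\<close> by blast
  qed simp
  thus ?thesis by simp
qed

lemma pos_ereal_cases[consumes 1, case_names infinite finite]:
  fixes t :: ereal
  assumes "0 < t"
  obtains (infinite) "t = \<infinity>" | (finite) t' where "t = ereal t'" "0 < t'"
  using assms by (cases t) auto

lemma xi_mono:
  assumes "nnbi \<phi>" "nnbi \<psi>" "0 < t" "\<And>x. \<phi> x \<le> \<psi> x"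
  shows "xi \<phi> t \<le> xi \<psi> t"
  using assms(3)
proof (cases rule: pos_ereal_cases)
  case infinite
  thus ?thesis using nnbiD(1)[OF assms(1)] nnbiD(1)[OF assms(2)] assms(4)
    by (auto simp: xi_infinity intro!: integral_mono)
next
  case (finite t')
  thus ?thesis using expm1_mass_mono[OF assms(1,2) _ assms(4)]
    by (simp add: xi_le_of_expm1_mass_le[OF assms(1,2)])
qed

text \<open>Part (ii): positive homogeneity; scaling phi by c is undone by rescaling r by 1/c.\<close>
lemma dual_J_cmult:
  assumes "0 < c" "0 < r"
  shows "dual_J (\<lambda>x. c * \<phi> x) t (r / c) = c * dual_J \<phi> t r"
  using assms by (simp add: dual_J_def expm1_mass_def)

lemma xi_cmult:
  assumes "nnbi \<phi>" "0 < t" "0 < c"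
  shows "xi (\<lambda>x. c * \<phi> x) t = c * xi \<phi> t"
  using assms(2)
proof (cases rule: pos_ereal_cases)
  case infinite
  thus ?thesis by (simp add: xi_infinity)
next
  case (finite t')
  have n: "nnbi (\<lambda>x. c * \<phi> x)" using nnbi_cmult[OF assms(1)] assms(3) by simp
  have "xi (\<lambda>x. c * \<phi> x) (ereal t') \<le> c * xi \<phi> (ereal t')"
  proof (rule xi_compare[OF n assms(1) finite(2) finite(2) assms(3)])
    fix r :: real assume "0 < r"
    have "dual_J (\<lambda>x. c * \<phi> x) t' (r / c) = c * dual_J \<phi> t' r"
      by (rule dual_J_cmult[OF assms(3) \<open>0 < r\<close>])
    thus "\<exists>r'>0. dual_J (\<lambda>x. c * \<phi> x) t' r' \<le> c * dual_J \<phi> t' r"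
      using \<open>0 < r\<close> assms(3) by (intro exI[of _ "r / c"]) simp
  qed
  moreover have "xi \<phi> (ereal t') \<le> (1 / c) * xi (\<lambda>x. c * \<phi> x) (ereal t')"
  proof (rule xi_compare[OF assms(1) n finite(2) finite(2)])
    fix r :: real assume "0 < r"
    have "dual_J (\<lambda>x. c * \<phi> x) t' (c * r / c) = c * dual_J \<phi> t' (c * r)"
      using dual_J_cmult[OF assms(3), of "c * r"] \<open>0 < r\<close> assms(3) by simp
    thus "\<exists>r'>0. dual_J \<phi> t' r' \<le> (1 / c) * dual_J (\<lambda>x. c * \<phi> x) t' r"
      using \<open>0 < r\<close> assms(3) by (intro exI[of _ "c * r"]) simp
  qed (use assms(3) in simp)
  ultimately show ?thesis using finite assms(3) by (simp add: field_simps)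
qed

text \<open>Part (iii): subadditivity; the optimal weight for phi + psi is admissible for both.\<close>
lemma xi_subadditive:
  assumes "nnbi \<phi>" "nnbi \<psi>" "0 < t"
  shows "xi (\<lambda>x. \<phi> x + \<psi> x) t \<le> xi \<phi> t + xi \<psi> t"
  using assms(3)
proof (cases rule: pos_ereal_cases)
  case infinite
  thus ?thesis using nnbiD(1)[OF assms(1)] nnbiD(1)[OF assms(2)] by (simp add: xi_infinity)
next
  case (finite t')
  have n: "nnbi (\<lambda>x. \<phi> x + \<psi> x)" using nnbi_add[OF assms(1,2)] .
  show ?thesis
  proof (cases "(LINT x|lebesgue. \<phi> x + \<psi> x) = 0")
    case True
    thus ?thesis using xi_nonneg[OF assms(1)] xi_nonneg[OF assms(2)] by (simp add: xi_null)
  next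
    case False
    define s where "s = weight_s (\<lambda>x. \<phi> x + \<psi> x) t'"
    let ?f = "\<lambda>x. exp (s * (\<phi> x + \<psi> x))"
    have s: "0 < s" "(LINT x|lebesgue. H (?f x)) = 1 / t'"
      using weight_s_char[OF n False finite(2)] by (auto simp: s_def entropy_at_def)
    have "xi (\<lambda>x. \<phi> x + \<psi> x) (ereal t') = (LINT x|lebesgue. \<phi> x * ?f x) + (LINT x|lebesgue. \<psi> x * ?f x)"
      using integrable_weighted[OF assms(1) n] integrable_weighted[OF assms(2) n] s(1)
      by (simp add: xi_finite[OF False] s_def distrib_right)
    also have "\<dots> \<le> xi \<phi> (ereal t') + xi \<psi> (ereal t')"
      using s integrable_H_exp[OF n] integrable_weighted[OF assms(1) n] integrable_weighted[OF assms(2) n]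
      by (intro add_mono weighted_le_xi finite(2) assms(1,2)) auto
    finally show ?thesis using finite by simp
  qed
qed

lemma lebesgue_dilation:
  fixes c :: real
  assumes "0 < c"
  shows "lebesgue = density (distr lebesgue lebesgue (\<lambda>x::'a::euclidean_space. c *\<^sub>R x)) (\<lambda>_. ennreal (c ^ DIM('a)))"
proof -
  have T: "(\<lambda>x::'a. 0 + (\<Sum>j\<in>Basis. (c * (x \<bullet> j)) *\<^sub>R j)) = (\<lambda>x. c *\<^sub>R x)"
    by (simp add: scaleR_sum_right[symmetric] euclidean_representation flip: scaleR_scaleR)
  have "lebesgue = density (distr lebesgue lebesgue (\<lambda>x::'a. 0 + (\<Sum>j\<in>Basis. (c * (x \<bullet> j)) *\<^sub>R j)))
      (\<lambda>_. ennreal (\<Prod>j\<in>(Basis::'a set). \<bar>c\<bar>))"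
    by (rule lebesgue_affine_euclidean) (use assms in auto)
  thus ?thesis unfolding T using assms by simp
qed

lemma integral_dilation:
  fixes c :: real and g :: "'a::euclidean_space \<Rightarrow> real"
  assumes c: "0 < c" and g[measurable]: "g \<in> borel_measurable lebesgue"
  shows "integrable lebesgue (\<lambda>x. g (c *\<^sub>R x)) \<longleftrightarrow> integrable lebesgue g"
    "integral\<^sup>L lebesgue g = c ^ DIM('a) * (LINT x|lebesgue. g (c *\<^sub>R x))"
proof -
  let ?D = "distr lebesgue lebesgue (\<lambda>x::'a. c *\<^sub>R x)"
  have T[measurable]: "(\<lambda>x::'a. c *\<^sub>R x) \<in> lebesgue \<rightarrow>\<^sub>M lebesgue" by (rule lebesgue_measurable_scaling)
  have gD: "g \<in> borel_measurable ?D" by simp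
  have "integrable lebesgue g \<longleftrightarrow> integrable ?D (\<lambda>x. c ^ DIM('a) *\<^sub>R g x)"
    by (subst lebesgue_dilation[OF c]) (rule integrable_density[OF gD]; use c in auto)
  also have "\<dots> \<longleftrightarrow> integrable lebesgue (\<lambda>x. c ^ DIM('a) *\<^sub>R g (c *\<^sub>R x))"
    by (rule integrable_distr_eq[OF T]) measurable
  finally show "integrable lebesgue (\<lambda>x. g (c *\<^sub>R x)) \<longleftrightarrow> integrable lebesgue g" using c by simp
  have "integral\<^sup>L lebesgue g = integral\<^sup>L ?D (\<lambda>x. c ^ DIM('a) *\<^sub>R g x)"
    by (subst lebesgue_dilation[OF c]) (rule integral_density[OF gD]; use c in auto)
  also have "\<dots> = (LINT x|lebesgue. c ^ DIM('a) *\<^sub>R g (c *\<^sub>R x))"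
    by (rule integral_distr[OF T]) measurable
  finally show "integral\<^sup>L lebesgue g = c ^ DIM('a) * (LINT x|lebesgue. g (c *\<^sub>R x))" by simp
qed

lemma nnbi_dilation:
  assumes "nnbi \<phi>" "0 < c"
  shows "nnbi (\<lambda>x. \<phi> (c *\<^sub>R x))"
proof -
  obtain B where "\<And>x. \<phi> x \<le> B" using nnbi_bound[OF assms(1)] by blast
  thus ?thesis using nnbiD[OF assms(1)] integral_dilation(1)[OF assms(2) nnbiD(3)[OF assms(1)]]
    by (intro nnbiI[where B=B]) auto
qed

lemma expm1_mass_dilation:
  assumes "nnbi \<phi>" "0 < c"
  shows "expm1_mass \<phi> r = c ^ DIM('a) * expm1_mass (\<lambda>x::'a::euclidean_space. \<phi> (c *\<^sub>R x)) r"
proof -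
  note [measurable] = nnbiD(3)[OF assms(1)]
  show ?thesis unfolding expm1_mass_def by (rule integral_dilation(2)[OF assms(2)]) measurable
qed

text \<open>Part (iv): a dilation with 0 < c < 1 multiplies the exponential mass by K = c^-d \<ge> 1.\<close>
lemma xi_dilation:
  fixes \<phi> :: "'a::euclidean_space \<Rightarrow> real"
  assumes "nnbi \<phi>" "0 < t" "0 < c" "c < 1"
  shows "xi \<phi> t \<le> xi (\<lambda>x. \<phi> (c *\<^sub>R x)) t"
    "xi (\<lambda>x. \<phi> (c *\<^sub>R x)) t \<le> c powi (- int DIM('a)) * xi \<phi> t"
proof -
  define K where "K = 1 / c ^ DIM('a)"
  have "0 < c ^ DIM('a)" "c ^ DIM('a) \<le> 1" using assms(3,4) by (auto simp: power_le_one)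
  hence K: "c powi (- int DIM('a)) = K" "1 \<le> K"
    by (simp_all add: K_def power_int_minus divide_inverse one_le_inverse)
  let ?\<phi>c = "\<lambda>x. \<phi> (c *\<^sub>R x)"
  have n: "nnbi ?\<phi>c" by (rule nnbi_dilation[OF assms(1,3)])
  have mass: "expm1_mass ?\<phi>c r = K * expm1_mass \<phi> r" for r
    using expm1_mass_dilation[OF assms(1,3), of r] assms(3) by (simp add: K_def)
  have int: "integral\<^sup>L lebesgue ?\<phi>c = K * integral\<^sup>L lebesgue \<phi>"
    using integral_dilation(2)[OF assms(3) nnbiD(3)[OF assms(1)]] assms(3) by (simp add: K_def)
  have grow: "y \<le> K * y" if "0 \<le> y" for y using K(2) that mult_right_mono[of 1 K y] by simp
  have "xi \<phi> t \<le> xi ?\<phi>c t \<and> xi ?\<phi>c t \<le> K * xi \<phi> t"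
    using assms(2)
  proof (cases rule: pos_ereal_cases)
    case infinite
    thus ?thesis using grow[OF nnbi_integral_nonneg[OF assms(1)]] by (simp add: xi_infinity int)
  next
    case (finite t')
    have "xi \<phi> (ereal t') \<le> xi ?\<phi>c (ereal t')"
      using grow[OF expm1_mass_nonneg[OF assms(1)]]
      by (intro xi_le_of_expm1_mass_le[OF assms(1) n finite(2)]) (simp add: mass)
    moreover have "xi ?\<phi>c (ereal t') \<le> K * xi \<phi> (ereal t')"
    proof (rule xi_compare[OF n assms(1) finite(2) finite(2)])
      fix r :: real assume "0 < r"
      have "1 / t' + K * expm1_mass \<phi> r \<le> K * (1 / t' + expm1_mass \<phi> r)"
        using grow[of "1 / t'"] finite(2) by (simp add: distrib_left)
      hence "dual_J ?\<phi>c t' r \<le> K * dual_J \<phi> t' r"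
        using \<open>0 < r\<close> by (simp add: dual_J_def mass divide_right_mono)
      thus "\<exists>r'>0. dual_J ?\<phi>c t' r' \<le> K * dual_J \<phi> t' r" using \<open>0 < r\<close> by blast
    qed (use K in simp)
    ultimately show ?thesis using finite by simp
  qed
  thus "xi \<phi> t \<le> xi ?\<phi>c t" "xi ?\<phi>c t \<le> c powi (- int DIM('a)) * xi \<phi> t" unfolding K(1) by auto
qed

text \<open>Part (v): increasing t relaxes the constraint 1/t, and J is affine in 1/t.\<close>
lemma xi_time_mono:
  assumes "nnbi \<phi>" "0 < t" "0 < h"
  shows "t / (t + h) * xi \<phi> (ereal t) \<le> xi \<phi> (ereal (t + h))"
    "xi \<phi> (ereal (t + h)) \<le> xi \<phi> (ereal t)"
proof -
  have th: "0 < t + h" using assms by simp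
  have "xi \<phi> (ereal (t + h)) \<le> 1 * xi \<phi> (ereal t)"
  proof (rule xi_compare[OF assms(1,1) th assms(2)])
    fix r :: real assume "0 < r"
    have "1 / (t + h) \<le> 1 / t" using assms by (simp add: frac_le)
    hence "dual_J \<phi> (t + h) r \<le> 1 * dual_J \<phi> t r" using \<open>0 < r\<close> by (simp add: dual_J_def divide_right_mono)
    thus "\<exists>r'>0. dual_J \<phi> (t + h) r' \<le> 1 * dual_J \<phi> t r" using \<open>0 < r\<close> by blast
  qed simp
  thus "xi \<phi> (ereal (t + h)) \<le> xi \<phi> (ereal t)" by simp
  have "xi \<phi> (ereal t) \<le> ((t + h) / t) * xi \<phi> (ereal (t + h))"
  proof (rule xi_compare[OF assms(1,1) assms(2) th])
    fix r :: real assume "0 < r"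
    have "expm1_mass \<phi> r \<le> (t + h) / t * expm1_mass \<phi> r"
      using expm1_mass_nonneg[OF assms(1)] \<open>0 < r\<close> assms mult_right_mono[of 1 "(t + h) / t" "expm1_mass \<phi> r"]
      by simp
    moreover have "(t + h) / t * dual_J \<phi> (t + h) r = (1 / t + (t + h) / t * expm1_mass \<phi> r) / r"
    proof -
      have "(t + h) / t * (1 / (t + h)) = 1 / t" using th by simp
      thus ?thesis unfolding dual_J_def by (metis distrib_left times_divide_eq_right)
    qed
    ultimately have "dual_J \<phi> t r \<le> (t + h) / t * dual_J \<phi> (t + h) r"
      using \<open>0 < r\<close> by (simp add: dual_J_def divide_right_mono)
    thus "\<exists>r'>0. dual_J \<phi> t r' \<le> (t + h) / t * dual_J \<phi> (t + h) r" using \<open>0 < r\<close> by blast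
  qed (use assms in simp)
  thus "t / (t + h) * xi \<phi> (ereal t) \<le> xi \<phi> (ereal (t + h))"
    using assms by (simp add: field_simps)
qed

definition upper_mass :: "('a::euclidean_space \<Rightarrow> real) \<Rightarrow> real \<Rightarrow> real" where
  "upper_mass \<phi> a = (LINT x|lebesgue. \<phi> x * indicator {y. \<phi> y \<ge> a} x)"

lemma upper_mass_nn_integral:
  assumes "nnbi \<phi>"
  shows "(\<integral>\<^sup>+x. ennreal (\<phi> x * indicator {y. \<phi> y \<ge> a} x) \<partial>lebesgue) = ennreal (upper_mass \<phi> a)"
  unfolding upper_mass_def
proof (rule nn_integral_eq_integral)
  note [measurable] = nnbiD(3)[OF assms]
  have "\<bar>\<phi> x * indicator {y. \<phi> y \<ge> a} x\<bar> \<le> 1 * \<phi> x" for x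
    using nnbiD(2)[OF assms, of x] by (simp add: indicator_def)
  thus "integrable lebesgue (\<lambda>x. \<phi> x * indicator {y. \<phi> y \<ge> a} x)"
    by (intro integrable_dominated[OF nnbiD(1)[OF assms], where C=1]) auto
qed (use nnbiD(2)[OF assms] in simp)

lemma sigma_finite_lebesgue: "sigma_finite_measure (lebesgue :: 'a::euclidean_space measure)"
proof
  obtain A :: "'a set set" where A: "countable A" "A \<subseteq> sets lborel" "\<Union>A = space lborel"
      "\<forall>a\<in>A. emeasure lborel a \<noteq> \<infinity>"
    using sigma_finite_measure.sigma_finite_countable[OF sigma_finite_lborel] by blast
  thus "\<exists>A::'a set set. countable A \<and> A \<subseteq> sets lebesgue \<and> \<Union>A = space lebesgue \<and> (\<forall>a\<in>A. emeasure lebesgue a \<noteq> \<infinity>)"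
    by (intro exI[of _ A]) (auto simp: emeasure_completion subset_eq)
qed

lemma nn_integral_power_FTC:
  fixes u :: real
  assumes "0 \<le> u"
  shows "(\<integral>\<^sup>+a. ennreal (real (Suc j) * a ^ j * indicator {0..u} a * u) \<partial>lborel) = ennreal (u ^ Suc (Suc j))"
proof -
  let ?g = "\<lambda>a::real. real (Suc j) * a ^ j * indicator {0..u} a"
  have "has_bochner_integral lborel ?g (u ^ Suc j - 0 ^ Suc j)"
  proof (rule has_bochner_integral_FTC_Icc_real[OF assms])
    fix x :: real
    show "DERIV (\<lambda>a. a ^ Suc j) x :> real (Suc j) * x ^ j" using DERIV_pow[of "Suc j" x] by simp
    show "isCont (\<lambda>a. real (Suc j) * a ^ j) x" by (intro continuous_intros)
  qed
  hence i: "integrable lborel ?g" and e: "integral\<^sup>L lborel ?g = u ^ Suc j"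
    by (auto simp: has_bochner_integral_iff)
  have "(\<integral>\<^sup>+a. ennreal (?g a * u) \<partial>lborel) = ennreal (LINT a|lborel. ?g a * u)"
    using i assms by (intro nn_integral_eq_integral) (auto simp: indicator_def)
  thus ?thesis using e by (simp add: mult.commute)
qed

text \<open>Layer-cake representation of the higher moments of phi through its upper masses:
  u^(j+2) = \<integral>_0^u (j+1) a^j u da, integrated in x and exchanged by Tonelli.\<close>
lemma moment_layer_cake:
  fixes \<phi> :: "'a::euclidean_space \<Rightarrow> real"
  assumes "nnbi \<phi>"
  shows "(\<integral>\<^sup>+x. ennreal (\<phi> x ^ Suc (Suc j)) \<partial>lebesgue)
    = (\<integral>\<^sup>+a. ennreal (real (Suc j) * a ^ j * indicator {0..} a) *
           (\<integral>\<^sup>+x. ennreal (\<phi> x * indicator {y. \<phi> y \<ge> a} x) \<partial>lebesgue) \<partial>lborel)"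
proof -
  interpret P: pair_sigma_finite lborel "lebesgue :: 'a measure"
    by (intro pair_sigma_finite.intro sigma_finite_lborel sigma_finite_lebesgue)
  note [measurable] = nnbiD(3)[OF assms]
  define f where "f a x = ennreal (real (Suc j) * a ^ j * indicator {0..} a) *
    ennreal (\<phi> x * indicator {y. \<phi> y \<ge> a} x)" for a :: real and x :: 'a
  have "case_prod f \<in> borel_measurable (lborel \<Otimes>\<^sub>M lebesgue)"
    unfolding f_def by measurable
  moreover have "(\<integral>\<^sup>+a. f a x \<partial>lborel) = ennreal (\<phi> x ^ Suc (Suc j))" for x
  proof -
    have fx: "f a x = ennreal (real (Suc j) * a ^ j * indicator {0..\<phi> x} a * \<phi> x)" for a
      unfolding f_def using nnbiD(2)[OF assms, of x]
      by (auto simp: indicator_def ennreal_mult[symmetric])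
    have "(\<integral>\<^sup>+a. f a x \<partial>lborel) = (\<integral>\<^sup>+a. ennreal (real (Suc j) * a ^ j * indicator {0..\<phi> x} a * \<phi> x) \<partial>lborel)"
      by (simp only: fx)
    also have "\<dots> = ennreal (\<phi> x ^ Suc (Suc j))" by (rule nn_integral_power_FTC[OF nnbiD(2)[OF assms]])
    finally show ?thesis .
  qed
  moreover have "(\<integral>\<^sup>+x. f a x \<partial>lebesgue) = ennreal (real (Suc j) * a ^ j * indicator {0..} a) *
           (\<integral>\<^sup>+x. ennreal (\<phi> x * indicator {y. \<phi> y \<ge> a} x) \<partial>lebesgue)" for a
    unfolding f_def by (rule nn_integral_cmult) measurable
  ultimately show ?thesis using P.Fubini'[of f] by simp
qed

lemma moment_le_of_upper_mass_le:
  fixes \<phi> \<psi> :: "'a::euclidean_space \<Rightarrow> real"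
  assumes "nnbi \<phi>" "nnbi \<psi>" "\<And>a. upper_mass \<phi> a \<le> upper_mass \<psi> a"
  shows "(\<integral>\<^sup>+x. ennreal (\<phi> x ^ Suc k) \<partial>lebesgue) \<le> (\<integral>\<^sup>+x. ennreal (\<psi> x ^ Suc k) \<partial>lebesgue)"
proof -
  have G: "(\<integral>\<^sup>+x. ennreal (\<phi> x * indicator {y. \<phi> y \<ge> a} x) \<partial>lebesgue) \<le>
            (\<integral>\<^sup>+x. ennreal (\<psi> x * indicator {y. \<psi> y \<ge> a} x) \<partial>lebesgue)" for a
    unfolding upper_mass_nn_integral[OF assms(1)] upper_mass_nn_integral[OF assms(2)]
    using assms(3) by (rule ennreal_leI)
  show ?thesis
  proof (cases k)
    case 0
    have "(\<integral>\<^sup>+x. ennreal (f x ^ Suc 0) \<partial>lebesgue) = (\<integral>\<^sup>+x. ennreal (f x * indicator {y. f y \<ge> 0} x) \<partial>lebesgue)"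
      if "nnbi f" for f :: "'a \<Rightarrow> real"
      using nnbiD(2)[OF that] by (intro nn_integral_cong) (simp add: indicator_def)
    thus ?thesis using G[of 0] assms(1,2) 0 by simp
  next
    case (Suc j)
    show ?thesis unfolding Suc moment_layer_cake[OF assms(1)] moment_layer_cake[OF assms(2)]
      by (intro nn_integral_mono mult_left_mono G) simp
  qed
qed

text \<open>Expanding e^(r phi) - 1 into its power series expresses the exponential mass through
  the moments of phi (as an identity of nonnegative extended reals).\<close>
lemma expm1_mass_series:
  fixes \<phi> :: "'a::euclidean_space \<Rightarrow> real"
  assumes "nnbi \<phi>" "0 \<le> r"
  shows "ennreal (expm1_mass \<phi> r) = (\<Sum>n. ennreal (r ^ Suc n / fact (Suc n)) * (\<integral>\<^sup>+x. ennreal (\<phi> x ^ Suc n) \<partial>lebesgue))"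
proof -
  note [measurable] = nnbiD(3)[OF assms(1)]
  have nn: "0 \<le> r * \<phi> x" for x using nnbiD(2)[OF assms(1), of x] assms(2) by simp
  have series: "ennreal (exp y - 1) = (\<Sum>n. ennreal (y ^ Suc n / fact (Suc n)))" if "0 \<le> y" for y :: real
  proof -
    have "(\<lambda>n. y ^ n / fact n) sums exp y" using exp_converges[of y] by (simp add: field_simps)
    hence s: "(\<lambda>n. y ^ Suc n / fact (Suc n)) sums (exp y - 1)" by (subst sums_Suc_iff) simp
    thus ?thesis using that by (simp add: suminf_ennreal2 sums_summable sums_unique[symmetric])
  qed
  have "ennreal (expm1_mass \<phi> r) = (\<integral>\<^sup>+x. ennreal (exp (r * \<phi> x) - 1) \<partial>lebesgue)"
    unfolding expm1_mass_def using integrable_expm1[OF assms] nn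
    by (intro nn_integral_eq_integral[symmetric]) auto
  also have "\<dots> = (\<integral>\<^sup>+x. (\<Sum>n. ennreal ((r * \<phi> x) ^ Suc n / fact (Suc n))) \<partial>lebesgue)"
    using series[OF nn] by simp
  also have "\<dots> = (\<Sum>n. (\<integral>\<^sup>+x. ennreal ((r * \<phi> x) ^ Suc n / fact (Suc n)) \<partial>lebesgue))"
    by (rule nn_integral_suminf) measurable
  also have "\<dots> = (\<Sum>n. ennreal (r ^ Suc n / fact (Suc n)) * (\<integral>\<^sup>+x. ennreal (\<phi> x ^ Suc n) \<partial>lebesgue))"
  proof (rule suminf_cong)
    fix n
    have "ennreal ((r * \<phi> x) ^ Suc n / fact (Suc n)) = ennreal (r ^ Suc n / fact (Suc n)) * ennreal (\<phi> x ^ Suc n)" for x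
      using nnbiD(2)[OF assms(1), of x] assms(2) by (simp add: power_mult_distrib ennreal_mult[symmetric])
    thus "(\<integral>\<^sup>+x. ennreal ((r * \<phi> x) ^ Suc n / fact (Suc n)) \<partial>lebesgue)
        = ennreal (r ^ Suc n / fact (Suc n)) * (\<integral>\<^sup>+x. ennreal (\<phi> x ^ Suc n) \<partial>lebesgue)"
      by (simp add: nn_integral_cmult)
  qed
  finally show ?thesis .
qed

text \<open>Part (vi): larger upper masses give larger moments, hence larger exponential mass.\<close>
lemma xi_upper_mass_mono:
  fixes \<phi> \<psi> :: "'a::euclidean_space \<Rightarrow> real"
  assumes "nnbi \<phi>" "nnbi \<psi>" "0 < t" "\<And>a. upper_mass \<phi> a \<le> upper_mass \<psi> a"
  shows "xi \<phi> t \<le> xi \<psi> t"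
  using assms(3)
proof (cases rule: pos_ereal_cases)
  case infinite
  have "upper_mass f 0 = integral\<^sup>L lebesgue f" if "nnbi f" for f :: "'a \<Rightarrow> real"
    unfolding upper_mass_def using nnbiD(2)[OF that]
    by (intro Bochner_Integration.integral_cong) (simp_all add: indicator_def)
  thus ?thesis using assms(1,2) assms(4)[of 0] infinite by (simp add: xi_infinity)
next
  case (finite t')
  have "expm1_mass \<phi> r \<le> expm1_mass \<psi> r" if "0 < r" for r
  proof -
    have "ennreal (expm1_mass \<phi> r) \<le> ennreal (expm1_mass \<psi> r)"
      unfolding expm1_mass_series[OF assms(1) less_imp_le[OF that]]
        expm1_mass_series[OF assms(2) less_imp_le[OF that]]
      by (intro suminf_le mult_left_mono moment_le_of_upper_mass_le[OF assms(1,2,4)] summableI) simp_all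
    thus ?thesis using expm1_mass_nonneg[OF assms(2)] that by simp
  qed
  thus ?thesis using xi_le_of_expm1_mass_le[OF assms(1,2) finite(2)] finite by simp
qed

lemma xi_le_explicit:
  assumes "nnbi \<phi>" "0 < t" "0 < r" "0 \<le> B" "\<And>x. \<phi> x \<le> B"
  shows "xi \<phi> (ereal t) \<le> 1 / (t * r) + exp (r * B) * integral\<^sup>L lebesgue \<phi>"
proof -
  have "xi \<phi> (ereal t) \<le> 1 / (t * r) + expm1_mass \<phi> r / r"
    using xi_le_dual_J[OF assms(1-3)] by (simp add: dual_J_def add_divide_distrib)
  moreover have "expm1_mass \<phi> r / r \<le> exp (r * B) * integral\<^sup>L lebesgue \<phi>"
    using expm1_mass_linear_bound[OF assms(1) _ assms(4,5), of r] assms(3)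
    by (simp add: pos_divide_le_eq algebra_simps)
  ultimately show ?thesis by simp
qed

text \<open>Part (vii): xi(phi,t) \<rightarrow> \<integral>phi as t \<rightarrow> \<infinity>: it stays above \<integral>phi, and the explicit
  bound with r small and then t large comes arbitrarily close.\<close>
lemma xi_tendsto_integral:
  assumes "nnbi \<phi>"
  shows "((\<lambda>t::real. xi \<phi> (ereal t)) \<longlongrightarrow> integral\<^sup>L lebesgue \<phi>) at_top"
proof (rule order_tendstoI)
  fix a assume "a < integral\<^sup>L lebesgue \<phi>"
  hence "0 < t \<Longrightarrow> a < xi \<phi> (ereal t)" for t using xi_ge_integral[OF assms, of t] by linarith
  thus "eventually (\<lambda>t. a < xi \<phi> (ereal t)) at_top"
    by (rule eventually_mono[OF eventually_gt_at_top[of 0]])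
next
  fix a assume a: "integral\<^sup>L lebesgue \<phi> < a"
  obtain B where B: "0 \<le> B" "\<And>x. \<phi> x \<le> B" using nnbi_bound[OF assms] by blast
  define e where "e = a - integral\<^sup>L lebesgue \<phi>"
  have e: "0 < e" using a by (simp add: e_def)
  have "((\<lambda>r. exp (r * B) * integral\<^sup>L lebesgue \<phi>) \<longlongrightarrow> exp (0 * B) * integral\<^sup>L lebesgue \<phi>) (at_right 0)"
    by (intro tendsto_intros)
  hence "eventually (\<lambda>r. exp (r * B) * integral\<^sup>L lebesgue \<phi> < integral\<^sup>L lebesgue \<phi> + e / 2) (at_right 0)"
    using e by (intro order_tendstoD(2)) auto
  hence "eventually (\<lambda>r. 0 < r \<and> exp (r * B) * integral\<^sup>L lebesgue \<phi> < integral\<^sup>L lebesgue \<phi> + e / 2) (at_right 0)"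
    by (intro eventually_conj eventually_at_right_less)
  then obtain r where r: "0 < r" "exp (r * B) * integral\<^sup>L lebesgue \<phi> < integral\<^sup>L lebesgue \<phi> + e / 2"
    using eventually_happens'[OF trivial_limit_at_right_real] by blast
  show "eventually (\<lambda>t. xi \<phi> (ereal t) < a) at_top"
  proof (rule eventually_mono[OF eventually_gt_at_top[of "max 0 (2 / (r * e))"]])
    fix t :: real assume t: "max 0 (2 / (r * e)) < t"
    have "0 < t" using t by simp
    have "2 < t * (r * e)" using t r(1) e by (simp add: pos_divide_less_eq)
    hence "1 / (t * r) < e / 2" using \<open>0 < t\<close> r(1) e by (simp add: divide_less_eq algebra_simps)
    thus "xi \<phi> (ereal t) < a"
      using xi_le_explicit[OF assms \<open>0 < t\<close> r(1) B] r(2) e_def by linarith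
  qed
qed

lemma integral_dominated_tendsto:
  fixes \<phi> \<psi> :: "'a::euclidean_space \<Rightarrow> real"
  assumes "\<And>n. \<Phi> n \<in> borel_measurable lebesgue" "\<phi> \<in> borel_measurable lebesgue" "integrable lebesgue \<psi>"
    "\<And>x. (\<lambda>n. \<Phi> n x) \<longlonglongrightarrow> \<phi> x" "\<And>n x. \<bar>\<Phi> n x\<bar> \<le> \<psi> x"
  shows "(\<lambda>n. integral\<^sup>L lebesgue (\<Phi> n)) \<longlonglongrightarrow> integral\<^sup>L lebesgue \<phi>"
  using assms by (intro integral_dominated_convergence[where w=\<psi>]) auto

text \<open>Lower semicontinuity in part (viii): the optimal weight for the limit phi is
  admissible for every Phi_n, and the weighted integrals converge by dominated convergence.\<close>
lemma xi_eventually_above: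
  assumes "nnbi \<phi>" "nnbi \<psi>" "0 < t" "\<And>n. nnbi (\<Phi> n)" "\<And>x. (\<lambda>n. \<Phi> n x) \<longlonglongrightarrow> \<phi> x"
    "\<And>n x. \<Phi> n x \<le> \<psi> x" "a < xi \<phi> (ereal t)"
  shows "eventually (\<lambda>n. a < xi (\<Phi> n) (ereal t)) sequentially"
proof (cases "integral\<^sup>L lebesgue \<phi> = 0")
  case True
  thus ?thesis using assms(7) xi_nonneg[OF assms(4)] by (simp add: xi_null less_le_trans)
next
  case False
  note [measurable] = nnbiD(3)[OF assms(1)] nnbiD(3)[OF assms(4)]
  define s where "s = weight_s \<phi> t"
  have s: "0 < s" "entropy_at \<phi> s = 1 / t" using weight_s_char[OF assms(1) False assms(3)] by (auto simp: s_def)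
  obtain B where B: "\<And>x. \<phi> x \<le> B" using nnbi_bound[OF assms(1)] by blast
  have "\<bar>\<Phi> n x * exp (s * \<phi> x)\<bar> \<le> exp (s * B) * \<psi> x" for n x
  proof -
    have "exp (s * \<phi> x) \<le> exp (s * B)" using mult_left_mono[OF B[of x]] s(1) by simp
    moreover have "0 \<le> \<Phi> n x" using nnbiD(2)[OF assms(4)] .
    ultimately show ?thesis using assms(6)[of n x] by (simp add: abs_mult mult.commute mult_mono)
  qed
  moreover have "(\<lambda>n. \<Phi> n x * exp (s * \<phi> x)) \<longlonglongrightarrow> \<phi> x * exp (s * \<phi> x)" for x
    using assms(5) by (intro tendsto_intros)
  moreover have "integrable lebesgue (\<lambda>x. exp (s * B) * \<psi> x)" using nnbiD(1)[OF assms(2)] by simp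
  ultimately have "(\<lambda>n. LINT x|lebesgue. \<Phi> n x * exp (s * \<phi> x)) \<longlonglongrightarrow> (LINT x|lebesgue. \<phi> x * exp (s * \<phi> x))"
    by (intro integral_dominated_tendsto[where \<psi>="\<lambda>x. exp (s * B) * \<psi> x"]) measurable
  moreover have "a < (LINT x|lebesgue. \<phi> x * exp (s * \<phi> x))"
    using assms(7) by (simp add: xi_finite[OF False] s_def)
  ultimately have ev: "eventually (\<lambda>n. a < (LINT x|lebesgue. \<Phi> n x * exp (s * \<phi> x))) sequentially"
    by (rule order_tendstoD(1))
  have le: "(LINT x|lebesgue. \<Phi> n x * exp (s * \<phi> x)) \<le> xi (\<Phi> n) (ereal t)" for n
    using s integrable_H_exp[OF assms(1)] integrable_weighted[OF assms(4) assms(1)]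
    by (intro weighted_le_xi[OF assms(4,3)]) (auto simp: entropy_at_def)
  show ?thesis using ev by (rule eventually_mono) (use le less_le_trans in blast)
qed

text \<open>Upper semicontinuity in part (viii): a nearly optimal r for phi is nearly optimal for
  Phi_n as well, since the exponential masses converge by dominated convergence.\<close>
lemma xi_eventually_below:
  assumes "nnbi \<phi>" "nnbi \<psi>" "0 < t" "\<And>n. nnbi (\<Phi> n)" "\<And>x. (\<lambda>n. \<Phi> n x) \<longlonglongrightarrow> \<phi> x"
    "\<And>n x. \<Phi> n x \<le> \<psi> x" "xi \<phi> (ereal t) < a"
  shows "eventually (\<lambda>n. xi (\<Phi> n) (ereal t) < a) sequentially"
proof -
  note [measurable] = nnbiD(3)[OF assms(1)] nnbiD(3)[OF assms(4)]
  define e where "e = (a - xi \<phi> (ereal t)) / 2"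
  have e: "0 < e" "xi \<phi> (ereal t) + e < a" using assms(7) by (simp_all add: e_def field_simps)
  then obtain r where r: "0 < r" "dual_J \<phi> t r \<le> xi \<phi> (ereal t) + e"
    using dual_J_approx[OF assms(1,3)] by blast
  have dom: "\<bar>exp (r * \<Phi> n x) - 1\<bar> \<le> exp (r * \<psi> x) - 1" for n x
  proof -
    have "0 \<le> r * \<Phi> n x" "r * \<Phi> n x \<le> r * \<psi> x"
      using nnbiD(2)[OF assms(4)] assms(6)[of n x] r(1) by (auto intro: mult_left_mono)
    thus ?thesis by simp
  qed
  have conv: "(\<lambda>n. exp (r * \<Phi> n x) - 1) \<longlonglongrightarrow> exp (r * \<phi> x) - 1" for x
    using assms(5) by (intro tendsto_intros)
  have "(\<lambda>n. expm1_mass (\<Phi> n) r) \<longlonglongrightarrow> expm1_mass \<phi> r"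
    unfolding expm1_mass_def
    by (rule integral_dominated_tendsto[OF _ _ integrable_expm1[OF assms(2) less_imp_le[OF r(1)]] conv dom])
      measurable
  hence "(\<lambda>n. dual_J (\<Phi> n) t r) \<longlonglongrightarrow> dual_J \<phi> t r"
    unfolding dual_J_def by (intro tendsto_intros) (use r(1) in auto)
  moreover have "dual_J \<phi> t r < a" using r(2) e(2) by linarith
  ultimately have "eventually (\<lambda>n. dual_J (\<Phi> n) t r < a) sequentially" by (rule order_tendstoD(2))
  thus ?thesis by (rule eventually_mono) (use xi_le_dual_J[OF assms(4,3) r(1)] le_less_trans in blast)
qed

lemma xi_dominated_convergence:
  assumes "nnbi \<phi>" "nnbi \<psi>" "0 < t" "\<And>n. nnbi (\<Phi> n)" "\<And>x. (\<lambda>n. \<Phi> n x) \<longlonglongrightarrow> \<phi> x"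
    "\<And>n x. \<Phi> n x \<le> \<psi> x"
  shows "(\<lambda>n. xi (\<Phi> n) t) \<longlonglongrightarrow> xi \<phi> t"
  using assms(3)
proof (cases rule: pos_ereal_cases)
  case infinite
  note [measurable] = nnbiD(3)[OF assms(1)] nnbiD(3)[OF assms(4)]
  have "(\<lambda>n. integral\<^sup>L lebesgue (\<Phi> n)) \<longlonglongrightarrow> integral\<^sup>L lebesgue \<phi>"
    using nnbiD(1)[OF assms(2)] assms(5,6) nnbiD(2)[OF assms(4)]
    by (intro integral_dominated_tendsto[where \<psi>=\<psi>]) auto
  thus ?thesis by (simp add: infinite xi_infinity)
next
  case (finite t')
  show ?thesis unfolding finite(1)
    using xi_eventually_above[OF assms(1,2) finite(2) assms(4-6)]
      xi_eventually_below[OF assms(1,2) finite(2) assms(4-6)]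
    by (rule order_tendstoI)
qed

theorem lemma2p1:
  fixes \<phi> \<psi> :: "'a::euclidean_space \<Rightarrow> real" and t :: ereal
  assumes "nnbi \<phi>" and "nnbi \<psi>" and "0 < t"
  shows
    "((\<forall>x. \<phi> x \<le> \<psi> x) \<longrightarrow> xi \<phi> t \<le> xi \<psi> t)
   \<and> (\<forall>c::real. c > 0 \<longrightarrow> xi (\<lambda>x. c * \<phi> x) t = c * xi \<phi> t)
   \<and> xi (\<lambda>x. \<phi> x + \<psi> x) t \<le> xi \<phi> t + xi \<psi> t
   \<and> (\<forall>c::real. 0 < c \<and> c < 1 \<longrightarrow>
        xi \<phi> t \<le> xi (\<lambda>x. \<phi> (c *\<^sub>R x)) t \<and>
        xi (\<lambda>x. \<phi> (c *\<^sub>R x)) t \<le> c powi (- int DIM('a)) * xi \<phi> t)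
   \<and> (\<forall>t'::real. \<forall>h::real. 0 < t' \<and> 0 < h \<longrightarrow>
        t' / (t' + h) * xi \<phi> (ereal t') \<le> xi \<phi> (ereal (t' + h)) \<and>
        xi \<phi> (ereal (t' + h)) \<le> xi \<phi> (ereal t'))
   \<and> ((\<forall>a::real. (LINT x|lebesgue. \<phi> x * indicator {y. \<phi> y \<ge> a} x)
               \<le> (LINT x|lebesgue. \<psi> x * indicator {y. \<psi> y \<ge> a} x))
        \<longrightarrow> xi \<phi> t \<le> xi \<psi> t)
   \<and> ((\<lambda>s::real. xi \<phi> (ereal s)) \<longlongrightarrow> (LINT x|lebesgue. \<phi> x)) at_top
   \<and> xi \<phi> \<infinity> = (LINT x|lebesgue. \<phi> x)
   \<and> (\<forall>\<Phi>::nat \<Rightarrow> 'a \<Rightarrow> real.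
        (\<forall>n. nnbi (\<Phi> n)) \<and> (\<forall>x. (\<lambda>n. \<Phi> n x) \<longlonglongrightarrow> \<phi> x) \<and> (\<forall>n x. \<Phi> n x \<le> \<psi> x)
        \<longrightarrow> (\<lambda>n. xi (\<Phi> n) t) \<longlonglongrightarrow> xi \<phi> t)"
proof (intro conjI allI impI)
  show "xi \<phi> t \<le> xi \<psi> t" if "\<forall>x. \<phi> x \<le> \<psi> x"
    using xi_mono[OF assms] that by blast
  show "xi (\<lambda>x. c * \<phi> x) t = c * xi \<phi> t" if "c > 0" for c
    by (rule xi_cmult[OF assms(1,3) that])
  show "xi (\<lambda>x. \<phi> x + \<psi> x) t \<le> xi \<phi> t + xi \<psi> t"
    by (rule xi_subadditive[OF assms])
  show "xi \<phi> t \<le> xi (\<lambda>x. \<phi> (c *\<^sub>R x)) t" "xi (\<lambda>x. \<phi> (c *\<^sub>R x)) t \<le> c powi (- int DIM('a)) * xi \<phi> t"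
    if "0 < c \<and> c < 1" for c
    using xi_dilation[OF assms(1,3)] that by auto
  show "t' / (t' + h) * xi \<phi> (ereal t') \<le> xi \<phi> (ereal (t' + h))" "xi \<phi> (ereal (t' + h)) \<le> xi \<phi> (ereal t')"
    if "0 < t' \<and> 0 < h" for t' h
    using xi_time_mono[OF assms(1)] that by auto
  show "xi \<phi> t \<le> xi \<psi> t"
    if "\<forall>a. (LINT x|lebesgue. \<phi> x * indicator {y. \<phi> y \<ge> a} x) \<le> (LINT x|lebesgue. \<psi> x * indicator {y. \<psi> y \<ge> a} x)"
    using xi_upper_mass_mono[OF assms] that by (simp add: upper_mass_def)
  show "((\<lambda>s. xi \<phi> (ereal s)) \<longlongrightarrow> (LINT x|lebesgue. \<phi> x)) at_top"
    by (rule xi_tendsto_integral[OF assms(1)])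
  show "xi \<phi> \<infinity> = (LINT x|lebesgue. \<phi> x)"
    by (rule xi_infinity)
  show "(\<lambda>n. xi (\<Phi> n) t) \<longlonglongrightarrow> xi \<phi> t"
    if "(\<forall>n. nnbi (\<Phi> n)) \<and> (\<forall>x. (\<lambda>n. \<Phi> n x) \<longlonglongrightarrow> \<phi> x) \<and> (\<forall>n x. \<Phi> n x \<le> \<psi> x)" for \<Phi>
    using xi_dominated_convergence[OF assms] that by blast
qed

end
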